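(* Let $c>0$, $k>0$, and $s,t\in\mathbb{R}$. Consider the function $$\gamma_1(x)=\frac{L'+M'\cos(s+x)}{N'+P'\cos(t+x)},\qquad x\in\mathbb{R},$$ with $L'=2$, $M'=2$, $N'=1+k^2+c$, $P'=2k$ (this corresponds to $\gamma_1(x)=\frac{P_0|a_1e^{jx}+h|^2}{P_1|b_1e^{jx}+g|^2+c}$ with $|a_1|=|b_1|=|h|=1$, $P_0=P_1=1$, $|g|=k$, $s=\angle a_1-\angle h$, $t=\angle b_1-\angle g$). Let $C'=(L'P')^2+(M'N')^2-2L'M'N'P'\cos(s-t)$ and let $\gamma_{\max}\ge\gamma_{\min}$ be the two values $$\frac{L'}{N'}-\frac{1}{N'}\,\frac{C'}{P'\bigl(L'P'-M'N'\cos(s-t)\bigr)\pm N'\sqrt{C'-\bigl(M'P'\sin(s-t)\bigr)^2}}$$ (the SINR values at the stationary points of $\gamma_1$). Let $\gamma_2=\gamma_1(-s)=\frac{L'+M'}{N'+P'\cos(s-t)}$ be the value at the signal-alignment choice $x=-s$. Then $$\gamma_{\max}-\gamma_2=g_1(k)=\frac{16k^2\sin^2(s-t)}{(k^2+2k\cos(s-t)+1+c)\bigl((k+1)^2+c\bigr)\bigl((k-1)^2+c\bigr)},$$ $$\gamma_2-\gamma_{\min}=g_2(k)=\frac{4}{k^2+2k\cos(s-t)+1+c}.$$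
   Context: $\angle z$ denotes the argument of a complex number $z$. The signal-alignment (SA) solution chooses the phase $x$ so that the reflected signal $a_1e^{jx}$ is phase-aligned with the direct signal $h$, i.e. $x=-s$. *)

theory Defs
  imports Complex_Main
begin

definition gamma1 :: "real \<Rightarrow> real \<Rightarrow> real \<Rightarrow> real \<Rightarrow> real \<Rightarrow> real \<Rightarrow> real \<Rightarrow> real" where
  "gamma1 L M N P s t x = (L + M * cos (s + x)) / (N + P * cos (t + x))"

definition Cprime :: "real \<Rightarrow> real \<Rightarrow> real \<Rightarrow> real \<Rightarrow> real \<Rightarrow> real \<Rightarrow> real" where
  "Cprime L M N P s t = (L*P)^2 + (M*N)^2 - 2*L*M*N*P*cos (s - t)"

definition stat_val :: "real \<Rightarrow> real \<Rightarrow> real \<Rightarrow> real \<Rightarrow> real \<Rightarrow> real \<Rightarrow> real \<Rightarrow> real" where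
  "stat_val L M N P s t \<sigma> =
     L / N - (1 / N) * (Cprime L M N P s t /
       (P * (L*P - M*N*cos (s - t)) + \<sigma> * N * sqrt (Cprime L M N P s t - (M*P*sin (s - t))^2)))"

end

theory Submission
  imports Defs
begin

text \<open>When the two numerator amplitudes agree (L = M) the radicand in the stationary values is the
perfect square L^2 (N - P cos(s - t))^2, so both stationary values are rational in cos(s - t): the
'+' branch is 0 (the numerator L (1 + cos(s + x)) vanishes at x = pi - s) and the '-' branch is
2 L (N - P cos(s - t)) / (N^2 - P^2). Against the value 2 L / (N + P cos(s - t)) at the
signal-alignment phase, the gap to the maximum then collapses to a multiple of sin^2(s - t).\<close>

lemma mult_cos_less:
  fixes N P :: real
  assumes "\<bar>P\<bar> < N"
  shows "P * cos x < N"
proof -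
  have "\<bar>P * cos x\<bar> \<le> \<bar>P\<bar>"
    by (simp add: abs_mult mult_left_le)
  then show ?thesis
    using assms by linarith
qed

lemma Cprime_equal_amplitudes:
  "Cprime L L N P s t = L^2 * (N^2 - 2 * N * P * cos (s - t) + P^2)"
  unfolding Cprime_def by (simp add: power2_eq_square algebra_simps)

lemma sqrt_discriminant_equal_amplitudes:
  fixes L N P :: real
  assumes "0 < L" and "\<bar>P\<bar> < N"
  shows "sqrt (Cprime L L N P s t - (L * P * sin (s - t))^2) = L * (N - P * cos (s - t))"
proof -
  have "0 \<le> L * (N - P * cos (s - t))"
    using assms mult_cos_less[OF assms(2), of "s - t"] by simp
  moreover have "Cprime L L N P s t - (L * P * sin (s - t))^2 = (L * (N - P * cos (s - t)))^2"
    unfolding Cprime_equal_amplitudes power_mult_distrib sin_squared_eq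
    by (simp add: power2_eq_square algebra_simps)
  ultimately show ?thesis
    by simp
qed

lemma stat_val_plus_equal_amplitudes:
  fixes L N P :: real
  assumes "0 < L" and "\<bar>P\<bar> < N"
  shows "stat_val L L N P s t 1 = 0"
proof -
  define X where "X = N^2 - 2 * N * P * cos (s - t) + P^2"
  have "X = (N - P * cos (s - t))^2 + (P * sin (s - t))^2"
    unfolding X_def power_mult_distrib sin_squared_eq by (simp add: power2_eq_square algebra_simps)
  moreover have "0 < (N - P * cos (s - t))^2"
    using mult_cos_less[OF assms(2), of "s - t"] by simp
  ultimately have "X > 0"
    by (simp add: add_pos_nonneg)
  moreover have "P * (L * P - L * N * cos (s - t)) + 1 * N * (L * (N - P * cos (s - t))) = L * X"
    unfolding X_def by (simp add: power2_eq_square algebra_simps)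
  moreover have "Cprime L L N P s t = L * (L * X)"
    unfolding Cprime_equal_amplitudes X_def by (simp add: power2_eq_square)
  ultimately show ?thesis
    unfolding stat_val_def sqrt_discriminant_equal_amplitudes[OF assms]
    using assms(1) by simp
qed

lemma stat_val_minus_equal_amplitudes:
  fixes L N P :: real
  assumes "0 < L" and "\<bar>P\<bar> < N"
  shows "stat_val L L N P s t (-1) = 2 * L * (N - P * cos (s - t)) / (N^2 - P^2)"
proof -
  have "N^2 - P^2 > 0"
    using power2_strict_mono[of P N] assms(2) by simp
  moreover have "N > 0"
    using assms(2) by linarith
  moreover have "P * (L * P - L * N * cos (s - t)) - N * (L * (N - P * cos (s - t)))
      = - (L * (N^2 - P^2))"
    by (simp add: power2_eq_square algebra_simps)
  ultimately show ?thesis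
    unfolding stat_val_def sqrt_discriminant_equal_amplitudes[OF assms]
    using assms(1) by (simp add: Cprime_equal_amplitudes field_simps power2_eq_square)
qed

lemma gamma1_signal_alignment:
  "gamma1 L M N P s t (-s) = (L + M) / (N + P * cos (s - t))"
  unfolding gamma1_def by (simp add: cos_minus[of "s - t", symmetric])

theorem signal_alignment_gaps_equal_amplitudes:
  fixes L N P s t :: real
  assumes "0 < L" and "\<bar>P\<bar> < N"
  defines "g_plus \<equiv> stat_val L L N P s t 1" and "g_minus \<equiv> stat_val L L N P s t (-1)"
    and "g_sa \<equiv> gamma1 L L N P s t (-s)"
  shows "max g_plus g_minus - g_sa
           = 2 * L * P^2 * (sin (s - t))^2 / ((N^2 - P^2) * (N + P * cos (s - t)))"
    and "g_sa - min g_plus g_minus = 2 * L / (N + P * cos (s - t))"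
proof -
  have "N^2 - P^2 > 0"
    using power2_strict_mono[of P N] assms(2) by simp
  have "N - P * cos (s - t) > 0" and "N + P * cos (s - t) > 0"
    using mult_cos_less[of P N "s - t"] mult_cos_less[of "-P" N "s - t"] assms(2) by auto
  have "g_plus = 0" and "g_minus = 2 * L * (N - P * cos (s - t)) / (N^2 - P^2)"
    unfolding g_plus_def g_minus_def
    using stat_val_plus_equal_amplitudes stat_val_minus_equal_amplitudes assms(1,2) by auto
  then have max_eq: "max g_plus g_minus = g_minus" and min_eq: "min g_plus g_minus = 0"
    using assms(1) \<open>N^2 - P^2 > 0\<close> \<open>N - P * cos (s - t) > 0\<close> by auto
  have g_sa_eq: "g_sa = 2 * L / (N + P * cos (s - t))"
    unfolding g_sa_def gamma1_signal_alignment by simp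
  have "g_minus - g_sa = 2 * L * P^2 * (1 - (cos (s - t))^2) / ((N^2 - P^2) * (N + P * cos (s - t)))"
    unfolding \<open>g_minus = _\<close> g_sa_eq
    using \<open>N^2 - P^2 > 0\<close> \<open>N + P * cos (s - t) > 0\<close>
    by (simp add: field_simps power2_eq_square)
  then show "max g_plus g_minus - g_sa
           = 2 * L * P^2 * (sin (s - t))^2 / ((N^2 - P^2) * (N + P * cos (s - t)))"
    by (simp add: max_eq sin_squared_eq)
  show "g_sa - min g_plus g_minus = 2 * L / (N + P * cos (s - t))"
    by (simp add: min_eq g_sa_eq)
qed

theorem corollary1:
  fixes c k s t :: real
  assumes "c > 0" and "k > 0"
  defines "L \<equiv> (2::real)" and "M \<equiv> (2::real)" and "N \<equiv> 1 + k^2 + c" and "P \<equiv> 2 * k"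
  defines "gmax \<equiv> max (stat_val L M N P s t 1) (stat_val L M N P s t (-1))"
      and "gmin \<equiv> min (stat_val L M N P s t 1) (stat_val L M N P s t (-1))"
      and "g2 \<equiv> gamma1 L M N P s t (-s)"
  shows "gmax - g2 = 16 * k^2 * (sin (s - t))^2 /
            ((k^2 + 2*k*cos (s - t) + 1 + c) * ((k + 1)^2 + c) * ((k - 1)^2 + c))
       \<and> g2 - gmin = 4 / (k^2 + 2*k*cos (s - t) + 1 + c)"
proof -
  have "N - P = (k - 1)^2 + c" and "N + P = (k + 1)^2 + c"
    unfolding N_def P_def by (simp_all add: power2_eq_square algebra_simps)
  moreover have "0 < (k - 1)^2 + c" and "0 < (k + 1)^2 + c"
    using assms(1) by (simp_all add: add_nonneg_pos)
  ultimately have "\<bar>P\<bar> < N"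
    unfolding abs_less_iff by linarith
  moreover have "N^2 - P^2 = ((k + 1)^2 + c) * ((k - 1)^2 + c)"
    unfolding N_def P_def by (simp add: power2_eq_square algebra_simps)
  moreover have "N + P * cos (s - t) = k^2 + 2*k*cos (s - t) + 1 + c"
    unfolding N_def P_def by simp
  ultimately show ?thesis
    using signal_alignment_gaps_equal_amplitudes[of L P N s t]
    unfolding gmax_def gmin_def g2_def M_def L_def[symmetric]
    by (simp add: L_def P_def power_mult_distrib mult.commute mult.left_commute)
qed

end
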